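(* Let $n\ge 3$ be an integer. (i) There exist a function $f:\mathbb{R}\to\mathbb{R}$ and a point $x$ such that the Peano derivative $f_{(n-1)}(x)$ exists and the $n$th symmetric Riemann derivative $D_n^sf(x)$ exists, but the Peano derivative $f_{(n)}(x)$ does not exist. (ii) There exist a function $f:\mathbb{R}\to\mathbb{R}$ and a point $x$ such that $f_{(2)}(x)$ exists and the third forward Riemann derivative $D_3f(x)$ exists, but $f_{(3)}(x)$ does not exist. *)

theory Defs
  imports "HOL-Analysis.Analysis"
begin

definition peano_deriv_exists :: "(real \<Rightarrow> real) \<Rightarrow> real \<Rightarrow> nat \<Rightarrow> bool" where
  "peano_deriv_exists f x k \<longleftrightarrow>
     (\<exists>a :: nat \<Rightarrow> real. a 0 = f x \<and>
        ((\<lambda>h. (f (x + h) - (\<Sum>j\<le>k. a j * h ^ j / fact j)) / h ^ k) \<longlongrightarrow> 0) (at 0))"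

definition sym_riemann_diff :: "nat \<Rightarrow> (real \<Rightarrow> real) \<Rightarrow> real \<Rightarrow> real \<Rightarrow> real" where
  "sym_riemann_diff n f x h =
     (\<Sum>i\<le>n. (-1) ^ i * real (n choose i) * f (x + (real n / 2 - real i) * h))"

definition sym_riemann_deriv_exists :: "nat \<Rightarrow> (real \<Rightarrow> real) \<Rightarrow> real \<Rightarrow> bool" where
  "sym_riemann_deriv_exists n f x \<longleftrightarrow>
     (\<exists>L. ((\<lambda>h. sym_riemann_diff n f x h / h ^ n) \<longlongrightarrow> L) (at 0))"

definition fwd_riemann_diff :: "nat \<Rightarrow> (real \<Rightarrow> real) \<Rightarrow> real \<Rightarrow> real \<Rightarrow> real" where
  "fwd_riemann_diff n f x h =
     (\<Sum>i\<le>n. (-1) ^ i * real (n choose i) * f (x + real (n - i) * h))"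

definition fwd_riemann_deriv_exists :: "nat \<Rightarrow> (real \<Rightarrow> real) \<Rightarrow> real \<Rightarrow> bool" where
  "fwd_riemann_deriv_exists n f x \<longleftrightarrow>
     (\<exists>L. ((\<lambda>h. fwd_riemann_diff n f x h / h ^ n) \<longlongrightarrow> L) (at 0))"

end

theory Submission
  imports Defs "HOL-Computational_Algebra.Primes"
begin

text \<open>
  (i) The function f(t) = t^(n-1) |t| is o(h^(n-1)) and satisfies (-1)^n f(-t) = -f(t), so all its
  symmetric differences of order n at 0 vanish. A Peano derivative of order n would force f(h)/h^n
  to converge, but its one-sided limits are 1 and -1.

  (ii) On the points h = -2^a 3^b (a, b integers) put F(h) = \<alpha>^a \<beta>^b with \<alpha> = 3 + i sqrt 23 and
  \<beta> = 6 + 3i sqrt 23, and F = 0 elsewhere. Since \<beta> = 3\<alpha> - 3, the third forward difference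
  F(3h) - 3F(2h) + 3F(h) - F(0) vanishes identically; since |\<alpha>|^2 = 2^5 and |\<beta>|^2 = 3^5, we have
  |F(h)| = |h|^(5/2) on the orbit. Hence Re F and Im F are o(h^2) and have third forward Riemann
  derivative 0, yet F(h)/h^3 does not tend to 0; as both vanish for h > 0, a third Peano
  derivative of either would have to be 0, so one of them has none.
\<close>

section \<open>Peano derivatives\<close>

lemma poly_coeffs_eq_0_if_little_o:
  fixes c :: "nat \<Rightarrow> real"
  assumes "((\<lambda>h. (\<Sum>j\<le>m. c j * h ^ j) / h ^ m) \<longlongrightarrow> 0) (at 0)" and "j \<le> m"
  shows "c j = 0"
  using assms
proof (induction m arbitrary: c j)
  case 0
  then show ?case by (simp add: tendsto_const_iff)
next
  case (Suc m)
  define R where "R h = (\<Sum>j\<le>m. c (Suc j) * h ^ j)" for h :: real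
  have split: "(\<Sum>j\<le>Suc m. c j * h ^ j) = c 0 + h * R h" for h
    unfolding R_def by (simp only: sum.atMost_Suc_shift) (simp add: sum_distrib_left algebra_simps)
  have "((\<lambda>h. (\<Sum>j\<le>Suc m. c j * h ^ j) / h ^ Suc m * h ^ Suc m) \<longlongrightarrow> 0) (at 0)"
    by (intro tendsto_mult_zero Suc.prems tendsto_eq_intros) auto
  then have "((\<lambda>h. c 0 + h * R h) \<longlongrightarrow> 0) (at 0)"
    by (rule Lim_transform_eventually)
       (auto simp: eventually_at_filter split simp del: sum.atMost_Suc)
  moreover have "((\<lambda>h. c 0 + h * R h) \<longlongrightarrow> c 0) (at 0)"
    unfolding R_def by (auto intro!: tendsto_eq_intros)
  ultimately have c0: "c 0 = 0"
    using tendsto_unique trivial_limit_at by blast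
  have "((\<lambda>h. (\<Sum>j\<le>m. c (Suc j) * h ^ j) / h ^ m) \<longlongrightarrow> 0) (at 0)"
    using Suc.prems(1)
    by (rule Lim_transform_eventually)
       (auto simp: eventually_at_filter split c0 R_def simp del: sum.atMost_Suc)
  with Suc.IH c0 show ?case
    using Suc.prems(2) by (cases j) auto
qed

lemma peano_deriv_exists_if_little_o:
  assumes "f x = 0" and "((\<lambda>h. f (x + h) / h ^ k) \<longlongrightarrow> 0) (at 0)"
  shows "peano_deriv_exists f x k"
  unfolding peano_deriv_exists_def by (rule exI[of _ "\<lambda>_. 0"]) (simp add: assms)

text \<open>If f(x+h) = o(h^m), the coefficients of the Peano expansion of order m+1 vanish below
  degree m+1, so f(x+h)/h^(m+1) tends to the top one.\<close>
lemma peano_deriv_exists_Suc_imp_convergent: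
  assumes "peano_deriv_exists f x (Suc m)" and "((\<lambda>h. f (x + h) / h ^ m) \<longlongrightarrow> 0) (at 0)"
  shows "\<exists>c. ((\<lambda>h. f (x + h) / h ^ Suc m) \<longlongrightarrow> c) (at 0)"
proof -
  obtain a where a: "((\<lambda>h. (f (x + h) - (\<Sum>j\<le>Suc m. a j * h ^ j / fact j)) / h ^ Suc m)
      \<longlongrightarrow> 0) (at 0)"
    using assms(1) unfolding peano_deriv_exists_def by auto
  define k where "k = a (Suc m) / fact (Suc m)"
  define Q where "Q h = (\<Sum>j\<le>m. a j / fact j * h ^ j)" for h :: real
  define r where "r h = f (x + h) - Q h - k * h ^ Suc m" for h
  have r: "((\<lambda>h. r h / h ^ Suc m) \<longlongrightarrow> 0) (at 0)"
    using a by (simp add: r_def Q_def k_def field_simps)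
  have "((\<lambda>h. r h / h ^ Suc m * h) \<longlongrightarrow> 0) (at 0)"
    by (intro tendsto_mult_zero r tendsto_ident_at)
  then have "((\<lambda>h. r h / h ^ m) \<longlongrightarrow> 0) (at 0)"
    by (rule Lim_transform_eventually) (auto simp: eventually_at_filter)
  from tendsto_diff[OF tendsto_diff[OF assms(2) this] tendsto_mult[OF tendsto_const[of k] tendsto_ident_at]]
  have "((\<lambda>h. Q h / h ^ m) \<longlongrightarrow> 0) (at 0)"
    by (rule Lim_transform_eventually[OF tendsto_eq_rhs])
       (auto simp: eventually_at_filter r_def field_simps)
  then have "a j / fact j = 0" if "j \<le> m" for j
    unfolding Q_def by (rule poly_coeffs_eq_0_if_little_o[OF _ that])
  then have "Q h = 0" for h
    by (simp add: Q_def)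
  then have "\<forall>\<^sub>F h in at 0. r h / h ^ Suc m + k = f (x + h) / h ^ Suc m"
    by (auto simp: eventually_at_filter r_def field_simps)
  then have "((\<lambda>h. f (x + h) / h ^ Suc m) \<longlongrightarrow> 0 + k) (at 0)"
    by (rule Lim_transform_eventually[OF tendsto_add[OF r tendsto_const]])
  then show ?thesis by blast
qed

section \<open>A symmetric Riemann derivative without Peano derivative\<close>

text \<open>Reflecting the summation index i to n - i turns every term into its negative.\<close>
lemma sym_riemann_diff_eq_0:
  assumes "\<And>t. (-1) ^ n * g (x - t) = - g (x + t)"
  shows "sym_riemann_diff n g x h = 0"
proof -
  define T where "T i = (-1) ^ i * real (n choose i) * g (x + (real n / 2 - real i) * h)" for i
  have "(\<Sum>i\<le>n. T i) = (\<Sum>i\<le>n. T (n - i))"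
    by (rule sum.reindex_bij_witness[where i="\<lambda>i. n - i" and j="\<lambda>i. n - i"]) auto
  also have "\<dots> = (\<Sum>i\<le>n. - T i)"
  proof (rule sum.cong[OF refl])
    fix i assume "i \<in> {..n}"
    then have i: "i \<le> n" by simp
    have sign: "(-1::real) ^ (n - i) = (-1) ^ n * (-1) ^ i"
      using i by (simp add: power_diff_conv_inverse)
    have "x + (real n / 2 - real (n - i)) * h = x - (real n / 2 - real i) * h"
      using i by (simp add: of_nat_diff field_simps)
    then have "T (n - i) = (-1) ^ i * real (n choose i) * ((-1) ^ n * g (x - (real n / 2 - real i) * h))"
      unfolding T_def by (simp add: sign binomial_symmetric[OF i, symmetric] mult_ac)
    then show "T (n - i) = - T i"
      by (simp add: assms T_def)
  qed
  finally show ?thesis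
    unfolding sym_riemann_diff_def T_def[symmetric] by (simp add: sum_negf)
qed

lemma power_abs_little_o: "((\<lambda>h. h ^ m * \<bar>h\<bar> / h ^ m) \<longlongrightarrow> 0) (at (0::real))"
proof -
  have "((\<lambda>h. \<bar>h\<bar>) \<longlongrightarrow> 0) (at (0::real))"
    using tendsto_rabs[OF tendsto_ident_at[of "0::real" UNIV]] by simp
  then show ?thesis
    by (rule Lim_transform_eventually) (auto simp: eventually_at_filter)
qed

lemma peano_deriv_exists_power_abs: "peano_deriv_exists (\<lambda>t. t ^ m * \<bar>t\<bar>) 0 m"
  using power_abs_little_o by (intro peano_deriv_exists_if_little_o) auto

lemma sym_riemann_deriv_exists_power_abs: "sym_riemann_deriv_exists (Suc m) (\<lambda>t. t ^ m * \<bar>t\<bar>) 0"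
proof -
  have "(-1) ^ Suc m * ((0 - t) ^ m * \<bar>0 - t\<bar>) = - ((0 + t) ^ m * \<bar>0 + t\<bar>)" for t :: real
    by (simp add: power_minus')
  then have "sym_riemann_diff (Suc m) (\<lambda>t. t ^ m * \<bar>t\<bar>) 0 h = 0" for h
    by (rule sym_riemann_diff_eq_0)
  then show ?thesis
    unfolding sym_riemann_deriv_exists_def by auto
qed

lemma not_peano_deriv_exists_power_abs: "\<not> peano_deriv_exists (\<lambda>t. t ^ m * \<bar>t\<bar>) 0 (Suc m)"
proof
  define q where "q h = h ^ m * \<bar>h\<bar> / h ^ Suc m" for h :: real
  assume "peano_deriv_exists (\<lambda>t. t ^ m * \<bar>t\<bar>) 0 (Suc m)"
  then obtain c where "(q \<longlongrightarrow> c) (at 0)"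
    using peano_deriv_exists_Suc_imp_convergent power_abs_little_o unfolding q_def by fastforce
  then have "(q \<longlongrightarrow> c) (at_right 0)" and "(q \<longlongrightarrow> c) (at_left 0)"
    by (simp_all add: filterlim_at_split)
  moreover have "(q \<longlongrightarrow> 1) (at_right 0)"
    by (rule Lim_transform_eventually[OF tendsto_const])
       (auto simp: eventually_at_right_field q_def intro: exI[of _ 1])
  moreover have "(q \<longlongrightarrow> -1) (at_left 0)"
    by (rule Lim_transform_eventually[OF tendsto_const])
       (auto simp: eventually_at_left_field q_def intro: exI[of _ "-1"])
  ultimately have "c = 1" and "c = -1"
    using tendsto_unique by (metis trivial_limit_at_right_real trivial_limit_at_left_real)+
  then show False by simp
qed

lemma exists_peano_sym_riemann_not_peano:
  assumes "n > 0"
  shows "\<exists>f x. peano_deriv_exists f x (n - 1) \<and> sym_riemann_deriv_exists n f x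
    \<and> \<not> peano_deriv_exists f x n"
proof -
  obtain m where "n = Suc m" using assms gr0_implies_Suc by blast
  then show ?thesis
    using peano_deriv_exists_power_abs[of m] sym_riemann_deriv_exists_power_abs[of m]
      not_peano_deriv_exists_power_abs[of m] by auto
qed

section \<open>A forward Riemann derivative without Peano derivative\<close>

lemma two_three_power_inj:
  assumes "(2::nat) ^ a * 3 ^ b = 2 ^ c * 3 ^ d"
  shows "a = c \<and> b = d"
proof -
  have mult: "multiplicity p ((2::nat) ^ a * 3 ^ b) =
      multiplicity p ((2::nat) ^ a) + multiplicity p ((3::nat) ^ b)" if "prime p" for p a b
    using that by (intro prime_elem_multiplicity_mult_distrib) auto
  have "multiplicity 2 ((2::nat) ^ a * 3 ^ b) = a" for a b
    by (simp add: mult multiplicity_distinct_prime_power)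
  moreover have "multiplicity 3 ((2::nat) ^ a * 3 ^ b) = b" for a b
    by (simp add: mult multiplicity_distinct_prime_power)
  ultimately show ?thesis using assms by metis
qed

lemma two_three_powi_inj:
  assumes "(2::real) powi a * 3 powi b = 2 powi c * 3 powi d"
  shows "a = c \<and> b = d"
proof -
  define N where "N = \<bar>a\<bar> + \<bar>b\<bar> + \<bar>c\<bar> + \<bar>d\<bar>"
  have shift: "(2::real) powi p * 3 powi q * (2 powi N * 3 powi N) = 2 ^ nat (p + N) * 3 ^ nat (q + N)"
    if "p + N \<ge> 0" "q + N \<ge> 0" for p q
  proof -
    have "(2::real) powi p * 3 powi q * (2 powi N * 3 powi N) = 2 powi (p + N) * 3 powi (q + N)"
      by (simp add: power_int_add)
    also have "\<dots> = 2 powi int (nat (p + N)) * 3 powi int (nat (q + N))"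
      using that by simp
    finally show ?thesis by (simp only: power_int_of_nat)
  qed
  have "a + N \<ge> 0" "b + N \<ge> 0" "c + N \<ge> 0" "d + N \<ge> 0"
    unfolding N_def by arith+
  then have "real (2 ^ nat (a + N) * 3 ^ nat (b + N)) = 2 powi a * 3 powi b * (2 powi N * 3 powi N)"
    and "real (2 ^ nat (c + N) * 3 ^ nat (d + N)) = 2 powi c * 3 powi d * (2 powi N * 3 powi N)"
    by (simp_all add: shift)
  then have "real (2 ^ nat (a + N) * 3 ^ nat (b + N)) = real (2 ^ nat (c + N) * 3 ^ nat (d + N))"
    using assms by simp
  then have "nat (a + N) = nat (c + N) \<and> nat (b + N) = nat (d + N)"
    by (intro two_three_power_inj) (simp only: of_nat_eq_iff)
  then show ?thesis
    using \<open>a + N \<ge> 0\<close> \<open>b + N \<ge> 0\<close> \<open>c + N \<ge> 0\<close> \<open>d + N \<ge> 0\<close> by (simp add: eq_nat_nat_iff)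
qed

lemma fwd_riemann_diff_3:
  "fwd_riemann_diff 3 g x h = g (x + 3 * h) - 3 * g (x + 2 * h) + 3 * g (x + h) - g x"
  by (simp add: fwd_riemann_diff_def numeral_3_eq_3 atMost_Suc)

definition neg_two_three_power :: "int \<times> int \<Rightarrow> real" where
  "neg_two_three_power = (\<lambda>(a, b). - (2 powi a * 3 powi b))"

definition \<alpha> :: complex where "\<alpha> = Complex 3 (sqrt 23)"
definition \<beta> :: complex where "\<beta> = Complex 6 (3 * sqrt 23)"

definition orbit_fun :: "real \<Rightarrow> complex" where
  "orbit_fun h = (if h \<in> range neg_two_three_power
     then (\<lambda>(a, b). \<alpha> powi a * \<beta> powi b) (inv neg_two_three_power h) else 0)"

lemma inj_neg_two_three_power: "inj neg_two_three_power"
proof (rule injI)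
  fix p q :: "int \<times> int"
  assume "neg_two_three_power p = neg_two_three_power q"
  then show "p = q"
    using two_three_powi_inj[of "fst p" "snd p" "fst q" "snd q"]
    by (simp add: neg_two_three_power_def split_beta prod_eq_iff)
qed

lemma neg_two_three_power_less_0: "neg_two_three_power p < 0"
  by (auto simp: neg_two_three_power_def split: prod.split)

lemma double_neg_two_three_power:
  "2 * neg_two_three_power (a, b) = neg_two_three_power (a + 1, b)"
  by (simp add: neg_two_three_power_def power_int_add)

lemma triple_neg_two_three_power:
  "3 * neg_two_three_power (a, b) = neg_two_three_power (a, b + 1)"
  by (simp add: neg_two_three_power_def power_int_add)

lemma double_in_range_neg_two_three_power_iff:
  "2 * h \<in> range neg_two_three_power \<longleftrightarrow> h \<in> range neg_two_three_power"
proof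
  assume "2 * h \<in> range neg_two_three_power"
  then obtain a b where "2 * h = neg_two_three_power (a, b)"
    by (metis rangeE surj_pair)
  also have "\<dots> = 2 * neg_two_three_power (a - 1, b)"
    by (simp add: double_neg_two_three_power)
  finally show "h \<in> range neg_two_three_power" by simp
next
  assume "h \<in> range neg_two_three_power"
  then obtain a b where "h = neg_two_three_power (a, b)"
    by (metis rangeE surj_pair)
  then show "2 * h \<in> range neg_two_three_power"
    by (simp add: double_neg_two_three_power)
qed

lemma triple_in_range_neg_two_three_power_iff:
  "3 * h \<in> range neg_two_three_power \<longleftrightarrow> h \<in> range neg_two_three_power"
proof
  assume "3 * h \<in> range neg_two_three_power"
  then obtain a b where "3 * h = neg_two_three_power (a, b)"
    by (metis rangeE surj_pair)
  also have "\<dots> = 3 * neg_two_three_power (a, b - 1)"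
    by (simp add: triple_neg_two_three_power)
  finally show "h \<in> range neg_two_three_power" by simp
next
  assume "h \<in> range neg_two_three_power"
  then obtain a b where "h = neg_two_three_power (a, b)"
    by (metis rangeE surj_pair)
  then show "3 * h \<in> range neg_two_three_power"
    by (simp add: triple_neg_two_three_power)
qed

lemma orbit_fun_neg_two_three_power:
  "orbit_fun (neg_two_three_power (a, b)) = \<alpha> powi a * \<beta> powi b"
  unfolding orbit_fun_def by (simp add: inv_f_f[OF inj_neg_two_three_power])

lemma orbit_fun_eq_0: "h \<notin> range neg_two_three_power \<Longrightarrow> orbit_fun h = 0"
  by (simp add: orbit_fun_def)

lemma orbit_fun_nonneg_eq_0: "h \<ge> 0 \<Longrightarrow> orbit_fun h = 0"
  using neg_two_three_power_less_0 by (metis orbit_fun_eq_0 leD rangeE)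

lemma orbit_fun_third_difference: "orbit_fun (3 * h) - 3 * orbit_fun (2 * h) + 3 * orbit_fun h = 0"
proof (cases "h \<in> range neg_two_three_power")
  case False
  then show ?thesis
    by (simp add: orbit_fun_eq_0 double_in_range_neg_two_three_power_iff
        triple_in_range_neg_two_three_power_iff)
next
  case True
  then obtain a b where h: "h = neg_two_three_power (a, b)" by auto
  have "\<alpha> \<noteq> 0" "\<beta> \<noteq> 0" by (auto simp: \<alpha>_def \<beta>_def complex_eq_iff)
  then have "orbit_fun (3 * h) - 3 * orbit_fun (2 * h) + 3 * orbit_fun h
      = (\<beta> - 3 * \<alpha> + 3) * (\<alpha> powi a * \<beta> powi b)"
    by (simp add: h double_neg_two_three_power triple_neg_two_three_power
        orbit_fun_neg_two_three_power power_int_add algebra_simps)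
  also have "\<beta> - 3 * \<alpha> + 3 = 0" by (simp add: \<alpha>_def \<beta>_def complex_eq_iff)
  finally show ?thesis by simp
qed

lemma norm_orbit_fun_neg_two_three_power:
  "cmod (orbit_fun (neg_two_three_power (a, b))) ^ 2 = \<bar>neg_two_three_power (a, b)\<bar> ^ 5"
proof -
  have swap: "(x powi k) ^ n = (x ^ n) powi k" for x :: real and k n
    by (simp add: power_int_power power_int_power' mult.commute)
  have "cmod (orbit_fun (neg_two_three_power (a, b))) ^ 2 = (cmod \<alpha> ^ 2) powi a * (cmod \<beta> ^ 2) powi b"
    by (simp add: orbit_fun_neg_two_three_power norm_mult norm_power_int power_mult_distrib swap)
  also have "\<dots> = (2 ^ 5) powi a * (3 ^ 5) powi b"
    by (simp add: \<alpha>_def \<beta>_def cmod_power2 power_mult_distrib)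
  also have "\<dots> = \<bar>neg_two_three_power (a, b)\<bar> ^ 5"
    by (simp add: neg_two_three_power_def power_mult_distrib swap)
  finally show ?thesis .
qed

lemma norm_orbit_fun_sq_le: "cmod (orbit_fun h) ^ 2 \<le> \<bar>h\<bar> ^ 5"
  by (cases "h \<in> range neg_two_three_power")
     (auto simp: orbit_fun_eq_0 norm_orbit_fun_neg_two_three_power)

lemma bounded_linear_orbit_fun_little_o:
  assumes "bounded_linear \<phi>"
  shows "((\<lambda>h. \<phi> (orbit_fun h) / h ^ 2) \<longlongrightarrow> 0) (at 0)"
proof -
  obtain K where K: "\<And>z. \<bar>\<phi> z\<bar> \<le> cmod z * K" and "K > 0"
    using bounded_linear.pos_bounded[OF assms] by auto
  have bound: "norm (\<phi> (orbit_fun h) / h ^ 2) \<le> K * sqrt \<bar>h\<bar>" if "h \<noteq> 0" for h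
  proof -
    have "(cmod (orbit_fun h) / h ^ 2) ^ 2 = cmod (orbit_fun h) ^ 2 / \<bar>h\<bar> ^ 4"
      by (simp add: power_divide power_even_abs_numeral flip: power_mult)
    also have "\<dots> \<le> \<bar>h\<bar> ^ 5 / \<bar>h\<bar> ^ 4"
      by (intro divide_right_mono norm_orbit_fun_sq_le) simp
    also have "\<dots> = \<bar>h\<bar>"
      using that power_diff[of "\<bar>h\<bar>" 4 5] by simp
    finally have "cmod (orbit_fun h) / h ^ 2 \<le> sqrt \<bar>h\<bar>"
      by (rule real_le_rsqrt)
    then have scaled: "K * (cmod (orbit_fun h) / h ^ 2) \<le> K * sqrt \<bar>h\<bar>"
      by (rule mult_left_mono[OF _ less_imp_le[OF \<open>K > 0\<close>]])
    have "norm (\<phi> (orbit_fun h) / h ^ 2) = \<bar>\<phi> (orbit_fun h)\<bar> / h ^ 2"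
      by (simp only: real_norm_def abs_divide abs_power2)
    also have "\<dots> \<le> cmod (orbit_fun h) * K / h ^ 2"
      by (rule divide_right_mono[OF K]) simp
    also have "\<dots> = K * (cmod (orbit_fun h) / h ^ 2)"
      by simp
    finally show ?thesis
      using scaled by (rule order_trans)
  qed
  have "((\<lambda>h. K * sqrt \<bar>h\<bar>) \<longlongrightarrow> 0) (at (0::real))"
    by (intro tendsto_mult_right_zero)
       (use tendsto_real_sqrt[OF tendsto_rabs[OF tendsto_ident_at[of "0::real" UNIV]]] in simp)
  then show ?thesis
  proof (rule Lim_null_comparison[rotated])
    show "\<forall>\<^sub>F h in at 0. norm (\<phi> (orbit_fun h) / h ^ 2) \<le> K * sqrt \<bar>h\<bar>"
      unfolding eventually_at_filter by (intro always_eventually allI impI bound)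
  qed
qed

lemma peano_deriv_exists_bounded_linear_orbit_fun:
  "bounded_linear \<phi> \<Longrightarrow> peano_deriv_exists (\<lambda>h. \<phi> (orbit_fun h)) 0 2"
  by (intro peano_deriv_exists_if_little_o)
     (auto simp: orbit_fun_nonneg_eq_0 bounded_linear_orbit_fun_little_o linear_simps)

lemma fwd_riemann_deriv_exists_bounded_linear_orbit_fun:
  assumes "bounded_linear \<phi>"
  shows "fwd_riemann_deriv_exists 3 (\<lambda>h. \<phi> (orbit_fun h)) 0"
proof -
  interpret bounded_linear \<phi> by (fact assms)
  have "fwd_riemann_diff 3 (\<lambda>h. \<phi> (orbit_fun h)) 0 h = 0" for h
  proof -
    have "fwd_riemann_diff 3 (\<lambda>h. \<phi> (orbit_fun h)) 0 h
        = \<phi> (orbit_fun (3 * h) - 3 *\<^sub>R orbit_fun (2 * h) + 3 *\<^sub>R orbit_fun h)"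
      by (simp add: fwd_riemann_diff_3 orbit_fun_nonneg_eq_0 diff add scale zero)
    also have "orbit_fun (3 * h) - 3 *\<^sub>R orbit_fun (2 * h) + 3 *\<^sub>R orbit_fun h = 0"
      using orbit_fun_third_difference[of h] by (simp add: scaleR_conv_of_real)
    finally show ?thesis by (simp add: zero)
  qed
  then show ?thesis
    unfolding fwd_riemann_deriv_exists_def by auto
qed

text \<open>Along h = -2^(-k) the quotient has modulus |h|^(-1/2).\<close>
lemma orbit_fun_not_little_o: "\<not> ((\<lambda>h. orbit_fun h / of_real (h ^ 3)) \<longlongrightarrow> 0) (at 0)"
proof
  assume "((\<lambda>h. orbit_fun h / of_real (h ^ 3)) \<longlongrightarrow> 0) (at 0)"
  then have "\<forall>\<^sub>F h in at 0. cmod (orbit_fun h / of_real (h ^ 3)) < 1"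
    using order_tendstoD(2)[OF tendsto_norm_zero] by force
  then obtain d where "d > 0" and d: "\<And>h. h \<noteq> 0 \<Longrightarrow> \<bar>h\<bar> < d \<Longrightarrow> cmod (orbit_fun h) < \<bar>h\<bar> ^ 3"
    unfolding eventually_at by (auto simp: norm_divide norm_power)
  obtain k where k: "(1 / 2) ^ k < d"
    using real_arch_pow_inv[OF \<open>d > 0\<close>, of "1 / 2"] by auto
  define h where "h = neg_two_three_power (- int k, 0)"
  have h: "\<bar>h\<bar> = (1 / 2) ^ k"
    by (simp add: h_def neg_two_three_power_def power_int_minus power_one_over inverse_eq_divide)
  then have "h \<noteq> 0" by (cases "h = 0") simp_all
  with h k have "cmod (orbit_fun h) ^ 2 < (\<bar>h\<bar> ^ 3) ^ 2"
    using d[of h] by (intro power_strict_mono) auto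
  also have "\<dots> \<le> \<bar>h\<bar> ^ 5"
    using h by (simp add: power_decreasing flip: power_mult)
  finally show False
    by (simp add: h_def norm_orbit_fun_neg_two_three_power)
qed

lemma exists_peano_fwd_riemann_not_peano:
  "\<exists>f x. peano_deriv_exists f x 2 \<and> fwd_riemann_deriv_exists 3 f x \<and> \<not> peano_deriv_exists f x 3"
proof (rule ccontr)
  assume contra: "\<not> ?thesis"
  have "((\<lambda>h. \<phi> (orbit_fun h) / h ^ 3) \<longlongrightarrow> 0) (at 0)" if \<phi>: "bounded_linear \<phi>" for \<phi>
  proof -
    let ?q = "\<lambda>h. \<phi> (orbit_fun h) / h ^ 3"
    have "peano_deriv_exists (\<lambda>h. \<phi> (orbit_fun h)) 0 3"
      using contra peano_deriv_exists_bounded_linear_orbit_fun[OF \<phi>]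
        fwd_riemann_deriv_exists_bounded_linear_orbit_fun[OF \<phi>] by blast
    then obtain c where c: "(?q \<longlongrightarrow> c) (at 0)"
      using peano_deriv_exists_Suc_imp_convergent[of _ 0 2] bounded_linear_orbit_fun_little_o[OF \<phi>]
      by (auto simp: numeral_3_eq_3)
    have "(?q \<longlongrightarrow> 0) (at_right 0)"
      by (rule Lim_transform_eventually[OF tendsto_const])
         (auto simp: eventually_at_right_field orbit_fun_nonneg_eq_0 linear_simps[OF \<phi>]
           intro: exI[of _ 1])
    with c have "c = 0"
      using tendsto_unique[OF trivial_limit_at_right_real] by (auto simp: filterlim_at_split)
    with c show ?thesis by simp
  qed
  from this[OF bounded_linear_Re] this[OF bounded_linear_Im]
  have "((\<lambda>h. orbit_fun h / of_real (h ^ 3)) \<longlongrightarrow> 0) (at 0)"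
    by (simp add: tendsto_complex_iff)
  with orbit_fun_not_little_o show False ..
qed

theorem theorem1:
  fixes n :: nat
  assumes "n \<ge> 3"
  shows "(\<exists>(f :: real \<Rightarrow> real) x. peano_deriv_exists f x (n - 1) \<and> sym_riemann_deriv_exists n f x
              \<and> \<not> peano_deriv_exists f x n)
       \<and> (\<exists>(f :: real \<Rightarrow> real) x. peano_deriv_exists f x 2 \<and> fwd_riemann_deriv_exists 3 f x
              \<and> \<not> peano_deriv_exists f x 3)"
  using exists_peano_sym_riemann_not_peano exists_peano_fwd_riemann_not_peano assms by simp

end
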